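(* For natural numbers $n,k$ with $2k\le n$ let $\overrightarrow{N}_{n,k}$ be the digraph with vertex set $\{1,\dots,n\}$ and edge set $\{(i,j):1\le i,j\le n\}\setminus\{(1,2),(3,4),\dots,(2k-1,2k)\}$. Every proper homomorphic image of $\overrightarrow{N}_{n,k}$ (i.e. every digraph $H$ for which there is a non-injective surjective homomorphism $\overrightarrow{N}_{n,k}\to H$) is isomorphic to $\overrightarrow{N}_{m,l}$ for some $m,l$ with $2l<m$. In particular, the set $\{\overrightarrow{N}_{2k,k}:k=1,2,3,\dots\}$ is an antichain under both the standard and the strong homomorphic image orderings.
   Context: A digraph is a set $D$ with a binary relation $E(D)\subseteq D\times D$ (loops allowed). A homomorphism maps edges to edges; it is strong if additionally every edge of the target between vertices of the image is the image of an edge. Standard homomorphic image ordering: $A\preceq B$ iff there is a surjective homomorphism $B\to A$; strong: iff there is a surjective strong homomorphism $B\to A$. An antichain is a set of pairwise incomparable elements. *)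

theory Defs
  imports Main
begin

type_synonym 'a digraph = "'a set \<times> ('a \<times> 'a) set"

definition digraph :: "'a digraph \<Rightarrow> bool" where
  "digraph G \<longleftrightarrow> snd G \<subseteq> fst G \<times> fst G"

definition is_hom :: "('a \<Rightarrow> 'b) \<Rightarrow> 'a digraph \<Rightarrow> 'b digraph \<Rightarrow> bool" where
  "is_hom f G H \<longleftrightarrow> f ` fst G \<subseteq> fst H \<and> (\<forall>(x, y) \<in> snd G. (f x, f y) \<in> snd H)"

definition is_strong_hom :: "('a \<Rightarrow> 'b) \<Rightarrow> 'a digraph \<Rightarrow> 'b digraph \<Rightarrow> bool" where
  "is_strong_hom f G H \<longleftrightarrow> is_hom f G H \<and>
     (\<forall>(a, b) \<in> snd H. a \<in> f ` fst G \<and> b \<in> f ` fst G \<longrightarrow>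
        (\<exists>(x, y) \<in> snd G. f x = a \<and> f y = b))"

definition surj_hom :: "('a \<Rightarrow> 'b) \<Rightarrow> 'a digraph \<Rightarrow> 'b digraph \<Rightarrow> bool" where
  "surj_hom f G H \<longleftrightarrow> is_hom f G H \<and> f ` fst G = fst H"

definition surj_strong_hom :: "('a \<Rightarrow> 'b) \<Rightarrow> 'a digraph \<Rightarrow> 'b digraph \<Rightarrow> bool" where
  "surj_strong_hom f G H \<longleftrightarrow> is_strong_hom f G H \<and> f ` fst G = fst H"

definition hom_image_le :: "'a digraph \<Rightarrow> 'b digraph \<Rightarrow> bool" where
  "hom_image_le A B \<longleftrightarrow> (\<exists>f. surj_hom f B A)"

definition strong_hom_image_le :: "'a digraph \<Rightarrow> 'b digraph \<Rightarrow> bool" where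
  "strong_hom_image_le A B \<longleftrightarrow> (\<exists>f. surj_strong_hom f B A)"

definition digraph_iso :: "'a digraph \<Rightarrow> 'b digraph \<Rightarrow> bool" where
  "digraph_iso G H \<longleftrightarrow> (\<exists>g. bij_betw g (fst G) (fst H) \<and>
     (\<forall>x \<in> fst G. \<forall>y \<in> fst G. (x, y) \<in> snd G \<longleftrightarrow> (g x, g y) \<in> snd H))"

definition Ndig :: "nat \<Rightarrow> nat \<Rightarrow> nat digraph" where
  "Ndig n k = ({1..n}, ({1..n} \<times> {1..n}) - {(2*t - 1, 2*t) | t. 1 \<le> t \<and> t \<le> k})"

end

theory Submission
  imports Defs
begin

text \<open>A homomorphism from \<open>N\<^sub>n\<^sub>,\<^sub>k\<close> can only lose an edge at a pair \<open>(2t-1, 2t)\<close> it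
  already misses. Hence every non-edge of a surjective image \<open>H\<close> is the image of exactly one
  missing pair, whose endpoints form whole fibres. So the non-edges of \<open>H\<close> form a matching
  (distinct sources, distinct targets, no vertex both a source and a target), and
  numbering the matched pairs first gives an isomorphism \<open>H \<cong> N\<^sub>m\<^sub>,\<^sub>l\<close>. A non-injective map has
  a fibre with two points, which cannot be an endpoint of a non-edge, so \<open>2l < m\<close>. For
  \<open>N\<^sub>2\<^sub>k\<^sub>,\<^sub>k\<close> every vertex is such an endpoint, so every surjective homomorphism onto it is
  injective and the number of vertices is preserved.\<close>

definition non_edges :: "'a digraph \<Rightarrow> ('a \<times> 'a) set" where
  "non_edges G = fst G \<times> fst G - snd G"

definition is_matching :: "('a \<times> 'a) set \<Rightarrow> bool" where
  "is_matching M \<longleftrightarrow> inj_on fst M \<and> inj_on snd M \<and> fst ` M \<inter> snd ` M = {}"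

definition Ndig_missing :: "nat \<Rightarrow> (nat \<times> nat) set" where
  "Ndig_missing k = (\<lambda>t. (2*t - 1, 2*t)) ` {1..k}"

lemma finite_non_edges: "finite (fst G) \<Longrightarrow> finite (non_edges G)"
  by (simp add: non_edges_def)

lemma endpoints_non_edges_subset: "fst ` non_edges H \<union> snd ` non_edges H \<subseteq> fst H"
  by (auto simp: non_edges_def)

lemma card_endpoints_matching:
  assumes "finite M" "is_matching M"
  shows "card (fst ` M \<union> snd ` M) = 2 * card M"
  using assms by (simp add: is_matching_def card_Un_disjoint card_image)

lemma double_card_non_edges_less:
  assumes "finite (fst H)" "is_matching (non_edges H)"
    and "w \<in> fst H" "w \<notin> fst ` non_edges H \<union> snd ` non_edges H"
  shows "2 * card (non_edges H) < card (fst H)"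
proof -
  have "fst ` non_edges H \<union> snd ` non_edges H \<subset> fst H"
    using assms(3,4) by (intro psubsetI endpoints_non_edges_subset) blast
  then have "card (fst ` non_edges H \<union> snd ` non_edges H) < card (fst H)"
    by (rule psubset_card_mono[OF assms(1)])
  then show ?thesis
    using card_endpoints_matching[OF finite_non_edges[OF assms(1)] assms(2)] by simp
qed

lemma digraph_iso_if_non_edges:
  assumes "bij_betw h (fst G) (fst H)" "map_prod h h ` non_edges G = non_edges H"
  shows "digraph_iso G H"
  unfolding digraph_iso_def
proof (intro exI conjI ballI)
  fix x y assume xy: "x \<in> fst G" "y \<in> fst G"
  have inj: "inj_on (map_prod h h) (fst G \<times> fst G)"
    using assms(1) by (simp add: bij_betw_def map_prod_inj_on)
  have sub: "non_edges G \<subseteq> fst G \<times> fst G" by (auto simp: non_edges_def)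
  have "(x, y) \<in> non_edges G \<longleftrightarrow> (h x, h y) \<in> non_edges H"
    using inj_on_image_mem_iff[OF inj _ sub, of "(x, y)"] xy assms(2) by simp
  moreover have "h x \<in> fst H" "h y \<in> fst H" using xy assms(1) bij_betwE by blast+
  ultimately show "(x, y) \<in> snd G \<longleftrightarrow> (h x, h y) \<in> snd H"
    using xy by (auto simp: non_edges_def)
qed (rule assms(1))

lemma digraph_iso_sym:
  assumes "digraph_iso G H"
  shows "digraph_iso H G"
proof -
  obtain g where g: "bij_betw g (fst G) (fst H)"
    and edges: "\<forall>x\<in>fst G. \<forall>y\<in>fst G. (x, y) \<in> snd G \<longleftrightarrow> (g x, g y) \<in> snd H"
    using assms unfolding digraph_iso_def by blast
  define g' where "g' = inv_into (fst G) g"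
  have g': "bij_betw g' (fst H) (fst G)"
    unfolding g'_def by (rule bij_betw_inv_into[OF g])
  have g_g': "g (g' a) = a" if "a \<in> fst H" for a
    using g that unfolding g'_def by (simp add: bij_betw_def f_inv_into_f)
  show ?thesis
    unfolding digraph_iso_def
  proof (intro exI conjI ballI)
    fix a b assume ab: "a \<in> fst H" "b \<in> fst H"
    then have "g' a \<in> fst G" "g' b \<in> fst G" using g' bij_betwE by blast+
    then show "(a, b) \<in> snd H \<longleftrightarrow> (g' a, g' b) \<in> snd G"
      using edges g_g' ab by simp
  qed (rule g')
qed

lemma surj_strong_hom_imp_surj_hom: "surj_strong_hom f G H \<Longrightarrow> surj_hom f G H"
  by (simp add: surj_strong_hom_def is_strong_hom_def surj_hom_def)

lemma fst_Ndig [simp]: "fst (Ndig n k) = {1..n}"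
  by (simp add: Ndig_def)

lemma non_edges_Ndig:
  assumes "2 * k \<le> n"
  shows "non_edges (Ndig n k) = Ndig_missing k"
  using assms by (auto simp: non_edges_def Ndig_def Ndig_missing_def)

lemma endpoints_Ndig_missing: "fst ` Ndig_missing k \<union> snd ` Ndig_missing k = {1..2*k}"
proof
  show "{1..2*k} \<subseteq> fst ` Ndig_missing k \<union> snd ` Ndig_missing k"
  proof
    fix v assume v: "v \<in> {1..2*k}"
    show "v \<in> fst ` Ndig_missing k \<union> snd ` Ndig_missing k"
    proof (cases "odd v")
      case True
      then have "v = fst (2 * ((v+1) div 2) - 1, 2 * ((v+1) div 2))" "(v+1) div 2 \<in> {1..k}"
        using v by (auto elim!: oddE)
      then show ?thesis unfolding Ndig_missing_def by blast
    next
      case False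
      then have "v = snd (2 * (v div 2) - 1, 2 * (v div 2))" "v div 2 \<in> {1..k}"
        using v by auto
      then show ?thesis unfolding Ndig_missing_def by blast
    qed
  qed
qed (auto simp: Ndig_missing_def)

lemma bij_onto_matching:
  assumes "finite W" "M \<subseteq> W \<times> W" "is_matching M"
  obtains h where "bij_betw h {1..card W} W" "map_prod h h ` Ndig_missing (card M) = M"
proof -
  define l m where "l = card M" and "m = card W"
  define R where "R = W - (fst ` M \<union> snd ` M)"
  have fin: "finite M" "finite R" using assms(1,2) finite_subset R_def by auto
  have ends: "fst ` M \<union> snd ` M \<subseteq> W" using assms(2) by auto
  have "card (fst ` M \<union> snd ` M) = 2 * l"
    using card_endpoints_matching[OF fin(1) assms(3)] l_def by simp
  with ends have card_R: "m = 2 * l + card R"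
    using card_mono[OF assms(1) ends] card_Diff_subset[OF finite_subset[OF ends assms(1)] ends]
    unfolding m_def R_def by simp
  obtain p where p: "bij_betw p {1..l} M" using ex_bij_betw_nat_finite_1[OF fin(1)] l_def by blast
  obtain q where q: "bij_betw q {0..<card R} R" using ex_bij_betw_nat_finite[OF fin(2)] by blast
  \<comment> \<open>\<open>h\<close> lists the matched pairs as \<open>(1, 2), (3, 4), \<dots>\<close>, then the unmatched vertices\<close>
  define h where "h i = (if i \<le> 2*l then if odd i then fst (p ((i+1) div 2)) else snd (p (i div 2))
                        else q (i - (2*l + 1)))" for i
  have h_pair: "(h (2*t - 1), h (2*t)) = p t" if "t \<in> {1..l}" for t
    using that by (auto simp: h_def)
  have "W \<subseteq> h ` {1..m}"
  proof
    fix w assume w: "w \<in> W"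
    consider (pair) t where "t \<in> {1..l}" "w = fst (p t) \<or> w = snd (p t)" | (rest) "w \<in> R"
      using w R_def bij_betw_imp_surj_on[OF p] by blast
    then show "w \<in> h ` {1..m}"
    proof cases
      case pair
      then have "w = h (2*t - 1) \<or> w = h (2*t)" using h_pair by (metis fst_conv snd_conv)
      moreover have "2*t - 1 \<in> {1..m}" "2*t \<in> {1..m}" using pair card_R by auto
      ultimately show ?thesis by blast
    next
      case rest
      then obtain j where "j < card R" "w = q j"
        using bij_betw_imp_surj_on[OF q] by (metis atLeastLessThan_iff imageE)
      moreover have "h (j + 2*l + 1) = q j" by (simp add: h_def)
      moreover have "j + 2*l + 1 \<in> {1..m}" using \<open>j < card R\<close> card_R by auto
      ultimately show ?thesis by (metis image_eqI)
    qed
  qed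
  then have img: "h ` {1..m} = W"
    using card_image_le[of "{1..m}" h] m_def by (intro card_seteq[symmetric]) auto
  then have "inj_on h {1..m}"
    by (intro eq_card_imp_inj_on) (simp_all add: m_def)
  with img have bij: "bij_betw h {1..m} W" by (simp add: bij_betw_def)
  have "map_prod h h ` Ndig_missing l = (\<lambda>t. (h (2*t - 1), h (2*t))) ` {1..l}"
    by (simp add: Ndig_missing_def image_image)
  also have "\<dots> = p ` {1..l}" using h_pair by (rule image_cong[OF refl])
  also have "\<dots> = M" using p by (simp add: bij_betw_def)
  finally show thesis using that[of h] bij by (simp add: m_def l_def)
qed

lemma digraph_iso_Ndig_if_matching:
  assumes "finite (fst H)" "is_matching (non_edges H)"
  shows "digraph_iso H (Ndig (card (fst H)) (card (non_edges H)))"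
proof -
  have sub: "non_edges H \<subseteq> fst H \<times> fst H" by (auto simp: non_edges_def)
  have "2 * card (non_edges H) \<le> card (fst H)"
    using card_endpoints_matching[OF finite_non_edges[OF assms(1)] assms(2)]
      card_mono[OF assms(1) endpoints_non_edges_subset] by simp
  then have "non_edges (Ndig (card (fst H)) (card (non_edges H))) = Ndig_missing (card (non_edges H))"
    by (rule non_edges_Ndig)
  moreover obtain h where "bij_betw h {1..card (fst H)} (fst H)"
    "map_prod h h ` Ndig_missing (card (non_edges H)) = non_edges H"
    using bij_onto_matching[OF assms(1) sub assms(2)] .
  ultimately have "digraph_iso (Ndig (card (fst H)) (card (non_edges H))) H"
    using digraph_iso_if_non_edges[of h] by simp
  then show ?thesis by (rule digraph_iso_sym)
qed

lemma Ndig_hom_lost_edge: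
  assumes "is_hom f (Ndig n k) H" "x \<in> {1..n}" "y \<in> {1..n}" "(f x, f y) \<notin> snd H"
  shows "\<exists>t. 1 \<le> t \<and> t \<le> k \<and> x = 2*t - 1 \<and> y = 2*t"
proof (rule ccontr)
  assume "\<not> ?thesis"
  then have "(x, y) \<in> snd (Ndig n k)" using assms(2,3) by (auto simp: Ndig_def)
  then show False using assms(1,4) by (auto simp: is_hom_def)
qed

lemma surj_hom_Ndig_non_edge_fibres:
  assumes f: "surj_hom f (Ndig n k) H" and ab: "(a, b) \<in> non_edges H"
  obtains t where "1 \<le> t"
    "{x \<in> {1..n}. f x = a} = {2*t - 1}" "{y \<in> {1..n}. f y = b} = {2*t}"
proof -
  have hom: "is_hom f (Ndig n k) H" and img: "f ` {1..n} = fst H"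
    using f by (auto simp: surj_hom_def)
  have missing: "\<exists>t. 1 \<le> t \<and> t \<le> k \<and> x = 2*t - 1 \<and> y = 2*t"
    if "x \<in> {1..n}" "y \<in> {1..n}" "f x = a" "f y = b" for x y
    using Ndig_hom_lost_edge[OF hom that(1,2)] that(3,4) ab by (simp add: non_edges_def)
  have "a \<in> f ` {1..n}" "b \<in> f ` {1..n}" using ab img by (auto simp: non_edges_def)
  then obtain x y where x: "x \<in> {1..n}" "f x = a" and y: "y \<in> {1..n}" "f y = b"
    by (metis imageE)
  obtain t where t: "1 \<le> t" "t \<le> k" "x = 2*t - 1" "y = 2*t"
    using missing[OF x(1) y(1) x(2) y(2)] by blast
  have "x' = x" if "x' \<in> {1..n}" "f x' = a" for x'
    using missing[OF that(1) y(1) that(2) y(2)] t by auto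
  moreover have "y' = y" if "y' \<in> {1..n}" "f y' = b" for y'
    using missing[OF x(1) that(1) x(2) that(2)] t by auto
  ultimately have "{x \<in> {1..n}. f x = a} = {2*t - 1}" "{y \<in> {1..n}. f y = b} = {2*t}"
    using x y t by blast+
  with t(1) show thesis by (rule that)
qed

lemma surj_hom_Ndig_non_edges_matching:
  assumes f: "surj_hom f (Ndig n k) H"
  shows "is_matching (non_edges H)"
proof -
  define P where "P e t \<longleftrightarrow> 1 \<le> t \<and>
      {x \<in> {1..n}. f x = fst e} = {2*t - 1} \<and> {y \<in> {1..n}. f y = snd e} = {2*t}" for e t
  define \<tau> where "\<tau> e = (SOME t. P e t)" for e
  have "P e (\<tau> e)" if "e \<in> non_edges H" for e
  proof -
    from that have "(fst e, snd e) \<in> non_edges H" by simp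
    then obtain t where "P e t"
      unfolding P_def by (rule surj_hom_Ndig_non_edge_fibres[OF f]) blast
    then show ?thesis unfolding \<tau>_def by (rule someI)
  qed
  then have pos: "1 \<le> \<tau> e"
    and src: "{x \<in> {1..n}. f x = fst e} = {2 * \<tau> e - 1}"
    and tgt: "{y \<in> {1..n}. f y = snd e} = {2 * \<tau> e}" if "e \<in> non_edges H" for e
    using that unfolding P_def by blast+
  have edge_eq: "e = (f (2 * \<tau> e - 1), f (2 * \<tau> e))" if "e \<in> non_edges H" for e
  proof -
    have "2 * \<tau> e - 1 \<in> {x \<in> {1..n}. f x = fst e}" "2 * \<tau> e \<in> {y \<in> {1..n}. f y = snd e}"
      using src[OF that] tgt[OF that] by simp_all
    then show ?thesis by (simp add: prod_eq_iff)
  qed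
  show ?thesis
    unfolding is_matching_def
  proof (intro conjI inj_onI)
    fix e e' assume e: "e \<in> non_edges H" "e' \<in> non_edges H" and "fst e = fst e'"
    then have "{2 * \<tau> e - 1} = {2 * \<tau> e' - 1}" using src[OF e(1)] src[OF e(2)] by (simp only:)
    then have "\<tau> e = \<tau> e'" using pos e by simp
    then show "e = e'" using edge_eq[OF e(1)] edge_eq[OF e(2)] by argo
  next
    fix e e' assume e: "e \<in> non_edges H" "e' \<in> non_edges H" and "snd e = snd e'"
    then have "{2 * \<tau> e} = {2 * \<tau> e'}" using tgt[OF e(1)] tgt[OF e(2)] by (simp only:)
    then have "\<tau> e = \<tau> e'" by simp
    then show "e = e'" using edge_eq[OF e(1)] edge_eq[OF e(2)] by argo
  next
    show "fst ` non_edges H \<inter> snd ` non_edges H = {}"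
    proof (rule ccontr)
      assume "fst ` non_edges H \<inter> snd ` non_edges H \<noteq> {}"
      then obtain e e' where e: "e \<in> non_edges H" "e' \<in> non_edges H" and "fst e = snd e'"
        by blast
      then have "{2 * \<tau> e - 1} = {2 * \<tau> e'}" using src[OF e(1)] tgt[OF e(2)] by (simp only:)
      with pos[OF e(1)] show False by simp presburger
    qed
  qed
qed

lemma surj_hom_Ndig_not_inj_uncovered:
  assumes f: "surj_hom f (Ndig n k) H" and not_inj: "\<not> inj_on f {1..n}"
  obtains w where "w \<in> fst H" "w \<notin> fst ` non_edges H \<union> snd ` non_edges H"
proof -
  obtain x y where xy: "x \<in> {1..n}" "y \<in> {1..n}" "x \<noteq> y" "f x = f y"
    using not_inj unfolding inj_on_def by blast
  have "f x \<in> fst H" using f xy by (auto simp: surj_hom_def)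
  moreover have "f x \<notin> fst ` non_edges H \<union> snd ` non_edges H"
  proof
    assume "f x \<in> fst ` non_edges H \<union> snd ` non_edges H"
    then consider (source) b where "(f x, b) \<in> non_edges H" | (target) a where "(a, f x) \<in> non_edges H"
      by force
    then obtain v where "{z \<in> {1..n}. f z = f x} = {v}"
    proof cases
      case source
      obtain t where "{z \<in> {1..n}. f z = f x} = {2*t - 1}"
        by (rule surj_hom_Ndig_non_edge_fibres[OF f source])
      then show thesis by (rule that)
    next
      case target
      obtain t where "{z \<in> {1..n}. f z = f x} = {2*t}"
        by (rule surj_hom_Ndig_non_edge_fibres[OF f target])
      then show thesis by (rule that)
    qed
    then have "x \<in> {v}" "y \<in> {v}" using xy by (simp_all only: flip: \<open>_ = {v}\<close>) simp_all
    with xy(3) show False by simp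
  qed
  ultimately show thesis by (rule that)
qed

lemma surj_hom_Ndig_full_eq:
  assumes f: "surj_hom f (Ndig (2*k') k') (Ndig (2*k) k)"
  shows "k' = k"
proof -
  have "inj_on f {1..2*k'}"
  proof (rule ccontr)
    assume "\<not> inj_on f {1..2*k'}"
    then obtain w where "w \<in> {1..2*k}"
      "w \<notin> fst ` non_edges (Ndig (2*k) k) \<union> snd ` non_edges (Ndig (2*k) k)"
      using surj_hom_Ndig_not_inj_uncovered[OF f] by auto
    then show False by (simp add: non_edges_Ndig endpoints_Ndig_missing)
  qed
  moreover have "f ` {1..2*k'} = {1..2*k}" using f by (simp add: surj_hom_def)
  ultimately have "card {1..2*k'} = card {1..2*k}" by (metis card_image)
  then show ?thesis by simp
qed

theorem proposition4p1:
  shows "(\<forall>(n::nat) (k::nat) (H::'a digraph) f.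
            2 * k \<le> n \<and> digraph H \<and> surj_hom f (Ndig n k) H \<and> \<not> inj_on f (fst (Ndig n k))
            \<longrightarrow> (\<exists>m l. 2 * l < m \<and> digraph_iso H (Ndig m l)))
       \<and> (\<forall>k k'. 1 \<le> k \<and> 1 \<le> k' \<and> k \<noteq> k' \<longrightarrow>
            \<not> hom_image_le (Ndig (2*k) k) (Ndig (2*k') k') \<and>
            \<not> strong_hom_image_le (Ndig (2*k) k) (Ndig (2*k') k'))"
proof (intro conjI allI impI)
  fix n k :: nat and H :: "'a digraph" and f
  assume "2 * k \<le> n \<and> digraph H \<and> surj_hom f (Ndig n k) H \<and> \<not> inj_on f (fst (Ndig n k))"
  then have f: "surj_hom f (Ndig n k) H" and not_inj: "\<not> inj_on f {1..n}" by simp_all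
  have fin: "finite (fst H)"
    using f unfolding surj_hom_def by (metis finite_atLeastAtMost finite_imageI fst_Ndig)
  have matching: "is_matching (non_edges H)" using f by (rule surj_hom_Ndig_non_edges_matching)
  obtain w where "w \<in> fst H" "w \<notin> fst ` non_edges H \<union> snd ` non_edges H"
    using f not_inj by (rule surj_hom_Ndig_not_inj_uncovered)
  then have "2 * card (non_edges H) < card (fst H)"
    by (rule double_card_non_edges_less[OF fin matching])
  with digraph_iso_Ndig_if_matching[OF fin matching]
  show "\<exists>m l. 2 * l < m \<and> digraph_iso H (Ndig m l)" by blast
next
  fix k k' :: nat assume "1 \<le> k \<and> 1 \<le> k' \<and> k \<noteq> k'"
  then have no_surj: "\<not> surj_hom g (Ndig (2*k') k') (Ndig (2*k) k)" for g
    using surj_hom_Ndig_full_eq by blast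
  then show "\<not> hom_image_le (Ndig (2*k) k) (Ndig (2*k') k')"
    by (simp add: hom_image_le_def)
  show "\<not> strong_hom_image_le (Ndig (2*k) k) (Ndig (2*k') k')"
    unfolding strong_hom_image_le_def using no_surj surj_strong_hom_imp_surj_hom by blast
qed

end
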